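(* Let $P\subset\mathbb{R}^d$ be a set of $n$ points and $s>1$. Every output $\mathcal{W}$ of the greedy $s$-WSPD algorithm (described in the context), regardless of the order in which pairs are chosen, has size $O(n s^d)$, where the implied constant depends only on $d$.
   Context: Fix $d\ge1$; $|xy|$ is Euclidean distance. For $p\in P$ and $r\ge0$, $B_r(p)=\{x\in P:|px|\le r\}$. Greedy $s$-WSPD algorithm: initially no pair of points is covered and $\mathcal{W}=\emptyset$. Repeat until every pair of distinct points of $P$ is covered: choose an arbitrary pair $(p,q)$ of distinct points not yet covered; add the pair $(B_r(p),B_r(q))$ to $\mathcal{W}$ with $r=|pq|/(2s+2)$; mark every pair $(x,y)$ with $x\in B_r(p)$ and $y\in B_r(q)$ as covered. The size of $\mathcal{W}$ is the number of pairs it contains. (The output is an $s$-well-separated pair decomposition: each pair $(A,B)$ satisfies $\min_{x\in A,y\in B}|xy|\ge s\max(\mathrm{diam} A,\mathrm{diam} B)$ and every pair of points is covered.) *)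

theory Defs
  imports "HOL-Analysis.Analysis"
begin

definition ballP :: "'a::euclidean_space set \<Rightarrow> 'a \<Rightarrow> real \<Rightarrow> 'a set" where
  "ballP P p r = {x \<in> P. dist p x \<le> r}"

definition greedy_pair :: "'a::euclidean_space set \<Rightarrow> real \<Rightarrow> 'a \<times> 'a \<Rightarrow> 'a set \<times> 'a set" where
  "greedy_pair P s pq = (let r = dist (fst pq) (snd pq) / (2 * s + 2)
                          in (ballP P (fst pq) r, ballP P (snd pq) r))"

definition covers :: "'a set \<times> 'a set \<Rightarrow> 'a \<Rightarrow> 'a \<Rightarrow> bool" where
  "covers AB x y \<longleftrightarrow> (x \<in> fst AB \<and> y \<in> snd AB) \<or> (y \<in> fst AB \<and> x \<in> snd AB)"

text \<open>A complete run of the greedy s-WSPD algorithm on P: the list of chosen pairs,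
  in order.\<close>
definition greedy_run :: "'a::euclidean_space set \<Rightarrow> real \<Rightarrow> ('a \<times> 'a) list \<Rightarrow> bool" where
  "greedy_run P s ps \<longleftrightarrow>
     (\<forall>i < length ps. fst (ps ! i) \<in> P \<and> snd (ps ! i) \<in> P \<and> fst (ps ! i) \<noteq> snd (ps ! i) \<and>
        (\<forall>j < i. \<not> covers (greedy_pair P s (ps ! j)) (fst (ps ! i)) (snd (ps ! i)))) \<and>
     (\<forall>x \<in> P. \<forall>y \<in> P. x \<noteq> y \<longrightarrow> (\<exists>i < length ps. covers (greedy_pair P s (ps ! i)) x y))"

definition greedy_output :: "'a::euclidean_space set \<Rightarrow> real \<Rightarrow> ('a \<times> 'a) list \<Rightarrow> ('a set \<times> 'a set) set" where
  "greedy_output P s ps = greedy_pair P s ` set ps"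

end

theory Submission
  imports Defs
begin

text \<open>
  Cut space into the dyadic grids of side \<open>2\<^sup>k\<close>, \<open>k \<in> \<int>\<close>, all with a common anchor. The
  points of \<open>P\<close> sharing a cell form a cluster; clusters of all levels form a laminar family,
  so there are at most \<open>2 |P|\<close> of them. A pair \<open>(p, q)\<close> chosen by the greedy algorithm is
  sent to the clusters of \<open>p\<close> and \<open>q\<close> at the level with \<open>d 2\<^sup>k \<approx> |pq| / (2s + 2)\<close>. These
  clusters lie in the two balls the algorithm adds, so a later pair with the same clusters
  would already be covered: the map is injective. Raising the level while both clusters
  stay unchanged, one of them reaches the last level \<open>h\<close> at which it is a cluster, and the
  other is a cluster of level \<open>h\<close> at distance \<open>O(d s 2\<^sup>h)\<close> from it. Since the last level of
  a cluster is unique, a packing argument allows only \<open>O(d s)\<^sup>d\<close> such partners per cluster.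
\<close>

section \<open>Laminar families\<close>

definition laminar :: "'a set set \<Rightarrow> bool" where
  "laminar F \<longleftrightarrow> (\<forall>A\<in>F. \<forall>B\<in>F. A \<inter> B = {} \<or> A \<subseteq> B \<or> B \<subseteq> A)"

lemma laminarD: "laminar F \<Longrightarrow> A \<in> F \<Longrightarrow> B \<in> F \<Longrightarrow> A \<inter> B \<noteq> {} \<Longrightarrow> A \<subseteq> B \<or> B \<subseteq> A"
  unfolding laminar_def by blast

lemma laminar_subset: "laminar F \<Longrightarrow> G \<subseteq> F \<Longrightarrow> laminar G"
  unfolding laminar_def by blast

lemma laminar_image_Diff:
  assumes "laminar F"
  shows "laminar ((\<lambda>S. S - C) ` F)"
  unfolding laminar_def
proof (intro ballI)
  fix A' B' assume "A' \<in> (\<lambda>S. S - C) ` F" "B' \<in> (\<lambda>S. S - C) ` F"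
  then obtain A B where "A \<in> F" "B \<in> F" "A' = A - C" "B' = B - C" by blast
  moreover have "A \<inter> B = {} \<or> A \<subseteq> B \<or> B \<subseteq> A"
    using assms \<open>A \<in> F\<close> \<open>B \<in> F\<close> unfolding laminar_def by blast
  ultimately show "A' \<inter> B' = {} \<or> A' \<subseteq> B' \<or> B' \<subseteq> A'" by blast
qed

lemma laminar_unique_insert:
  assumes "laminar F" "{} \<notin> F"
    and "A \<in> F" "insert x A \<in> F" "x \<notin> A"
    and "B \<in> F" "insert x B \<in> F" "x \<notin> B"
  shows "A = B"
proof -
  have eq: "A = B"
    if "A \<in> F" "insert x A \<in> F" "x \<notin> A" "B \<in> F" "x \<notin> B" "insert x A \<subseteq> insert x B" for A B
  proof -
    have "A \<subseteq> B" using that(3,6) by blast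
    moreover have "A \<noteq> {}" using assms(2) that(1) by blast
    ultimately have "insert x A \<inter> B \<noteq> {}" by blast
    then have "insert x A \<subseteq> B \<or> B \<subseteq> insert x A"
      using laminarD[OF assms(1) that(2,4)] by blast
    then show ?thesis using \<open>A \<subseteq> B\<close> that(3,5) by blast
  qed
  have "insert x A \<subseteq> insert x B \<or> insert x B \<subseteq> insert x A"
    using laminarD[OF assms(1,4,7)] by blast
  then show ?thesis
    using eq[OF assms(3-6,8)] eq[OF assms(6-8,3,5)] by blast
qed

lemma card_laminar_point_extensions_le:
  assumes "laminar F" "{} \<notin> F" "finite F"
  shows "card {S \<in> F. x \<in> S \<and> S - {x} \<in> F} \<le> 1"
proof -
  have "S = T" if "S \<in> F" "x \<in> S" "S - {x} \<in> F" "T \<in> F" "x \<in> T" "T - {x} \<in> F" for S T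
  proof -
    have "S - {x} = T - {x}"
      using laminar_unique_insert[OF assms(1,2), of "S - {x}" x "T - {x}"] that
      by (simp add: insert_absorb)
    with that(2,5) show "S = T" by blast
  qed
  then show ?thesis using assms(3) by (auto simp: card_le_Suc0_iff_eq)
qed

lemma card_laminar_le:
  assumes "finite X" "F \<subseteq> Pow X" "{} \<notin> F" "laminar F"
  shows "card F \<le> 2 * card X"
  using assms
proof (induction X arbitrary: F rule: finite_induct)
  case empty
  then have "F = {}" by auto
  then show ?case by simp
next
  case (insert x X)
  let ?f = "\<lambda>S. S - {x}"
  define E where "E = {S \<in> F. x \<in> S \<and> S - {x} \<in> F}"
  have finF: "finite F"
    using insert.prems(1) insert.hyps(1) by (meson finite_Pow_iff finite_insert rev_finite_subset)
  have "card E \<le> 1"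
    unfolding E_def using card_laminar_point_extensions_le[OF insert.prems(3,2) finF] .
  have IH: "card (?f ` F - {{}}) \<le> 2 * card X"
  proof (rule insert.IH)
    show "?f ` F - {{}} \<subseteq> Pow X" using insert.prems(1) by auto
    show "laminar (?f ` F - {{}})"
      using laminar_image_Diff[OF insert.prems(3)] by (rule laminar_subset) blast
  qed simp
  have "inj_on ?f (F - E)"
  proof (rule inj_onI)
    fix S T assume S: "S \<in> F - E" and T: "T \<in> F - E" and eq: "S - {x} = T - {x}"
    show "S = T"
    proof (cases "x \<in> S \<longleftrightarrow> x \<in> T")
      case True
      then show ?thesis using eq by blast
    next
      case False
      then have "S - {x} = T \<or> T - {x} = S" using eq by blast
      then have "S \<in> E \<or> T \<in> E" using False S T unfolding E_def by auto
      then show ?thesis using S T by blast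
    qed
  qed
  then have "card (F - E) = card (?f ` (F - E))" by (rule card_image[symmetric])
  also have "\<dots> \<le> card (?f ` F)" using finF by (intro card_mono) auto
  also have "\<dots> \<le> card (?f ` F - {{}}) + 1"
    using card_Suc_Diff1[of "?f ` F" "{}"] finF by (cases "{} \<in> ?f ` F") simp_all
  also have "\<dots> \<le> 2 * card X + 1" using IH by simp
  finally have "card (F - E) \<le> 2 * card X + 1" .
  moreover have "card F \<le> card (F - E) + card E"
    using card_Un_le[of "F - E" E] by (simp add: Un_absorb2 E_def)
  ultimately show ?case using \<open>card E \<le> 1\<close> insert.hyps by simp
qed

section \<open>Dyadic grids and clusters\<close>

text \<open>The cell of side \<open>2\<^sup>k\<close> containing \<open>x\<close>, in the grid with a vertex at \<open>z\<close>, is recorded by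
  its integer coordinates; restricting to \<open>Basis\<close> makes equal cells equal functions.\<close>

definition dyadic_cell :: "'a::euclidean_space \<Rightarrow> int \<Rightarrow> 'a \<Rightarrow> ('a \<Rightarrow> int)" where
  "dyadic_cell z k x = (\<lambda>b\<in>Basis. \<lfloor>((x - z) \<bullet> b) / 2 powr k\<rfloor>)"

lemma dyadic_cell_eq_iff:
  "dyadic_cell z k x = dyadic_cell z k y \<longleftrightarrow>
    (\<forall>b\<in>Basis. \<lfloor>((x - z) \<bullet> b) / 2 powr k\<rfloor> = \<lfloor>((y - z) \<bullet> b) / 2 powr k\<rfloor>)"
proof
  assume eq: "dyadic_cell z k x = dyadic_cell z k y"
  show "\<forall>b\<in>Basis. \<lfloor>((x - z) \<bullet> b) / 2 powr k\<rfloor> = \<lfloor>((y - z) \<bullet> b) / 2 powr k\<rfloor>"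
  proof
    fix b :: 'a assume "b \<in> Basis"
    then show "\<lfloor>((x - z) \<bullet> b) / 2 powr k\<rfloor> = \<lfloor>((y - z) \<bullet> b) / 2 powr k\<rfloor>"
      using fun_cong[OF eq, of b] by (simp add: dyadic_cell_def)
  qed
qed (auto simp: dyadic_cell_def intro: restrict_ext)

lemma floor_divide_two_powr_add_one:
  "\<lfloor>t / 2 powr (real_of_int (k + 1))\<rfloor> = \<lfloor>t / 2 powr (real_of_int k)\<rfloor> div 2"
proof -
  have "t / 2 powr (real_of_int (k + 1)) = (t / 2 powr (real_of_int k)) / real_of_int 2"
    by (simp add: powr_add)
  then show ?thesis by (simp only: floor_divide_real_eq_div)
qed

lemma dyadic_cell_eq_mono:
  assumes "k \<le> h" "dyadic_cell z k x = dyadic_cell z k y"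
  shows "dyadic_cell z h x = dyadic_cell z h y"
  using assms
proof (induction h rule: int_ge_induct)
  case (step i)
  then show ?case unfolding dyadic_cell_eq_iff using floor_divide_two_powr_add_one by metis
qed simp

lemma dist_le_if_dyadic_cell_eq:
  fixes x :: "'a::euclidean_space"
  assumes "dyadic_cell z k x = dyadic_cell z k y"
  shows "dist x y \<le> real DIM('a) * 2 powr k"
proof -
  have coord: "\<bar>(x - y) \<bullet> b\<bar> \<le> 2 powr k" if "b \<in> Basis" for b
  proof -
    let ?a = "2 powr (real_of_int k)"
    have "\<lfloor>((x - z) \<bullet> b) / ?a\<rfloor> = \<lfloor>((y - z) \<bullet> b) / ?a\<rfloor>"
      using assms that unfolding dyadic_cell_eq_iff by blast
    then have "\<bar>((x - z) \<bullet> b) / ?a - ((y - z) \<bullet> b) / ?a\<bar> < 1" by linarith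
    then have "\<bar>(x - y) \<bullet> b\<bar> / ?a < 1" by (simp add: diff_divide_distrib[symmetric] inner_diff_left)
    then show ?thesis by (simp add: divide_less_eq)
  qed
  have "dist x y \<le> (\<Sum>b\<in>Basis. \<bar>(x - y) \<bullet> b\<bar>)" unfolding dist_norm by (rule norm_le_l1)
  also have "\<dots> \<le> (\<Sum>b\<in>(Basis::'a set). 2 powr k)" by (rule sum_mono) (rule coord)
  finally show ?thesis by simp
qed

lemma dyadic_cell_eq_zero:
  assumes "\<forall>b\<in>Basis. 0 \<le> (x - z) \<bullet> b \<and> (x - z) \<bullet> b < 2 powr k"
  shows "dyadic_cell z k x = (\<lambda>b\<in>Basis. 0)"
  unfolding dyadic_cell_def using assms by (intro restrict_ext) (simp add: floor_eq_iff divide_less_eq)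

lemma card_floor_interval_le:
  assumes "u \<le> v"
  shows "real (card {\<lfloor>u\<rfloor>..\<lfloor>v\<rfloor>}) \<le> v - u + 2"
proof -
  have "\<lfloor>u\<rfloor> \<le> \<lfloor>v\<rfloor>" using assms by (rule floor_mono)
  then have "real (card {\<lfloor>u\<rfloor>..\<lfloor>v\<rfloor>}) = real_of_int \<lfloor>v\<rfloor> - real_of_int \<lfloor>u\<rfloor> + 1" by simp
  then show ?thesis by linarith
qed

lemma card_dyadic_cells_cball_le:
  fixes y :: "'a::euclidean_space"
  assumes "\<rho> \<ge> 0"
  shows "real (card (dyadic_cell z h ` (S \<inter> cball y \<rho>))) \<le> (2 * \<rho> / 2 powr h + 2) ^ DIM('a)"
proof -
  let ?a = "2 powr (real_of_int h)"
  define I where "I b = {\<lfloor>((y - z) \<bullet> b - \<rho>) / ?a\<rfloor>..\<lfloor>((y - z) \<bullet> b + \<rho>) / ?a\<rfloor>}" for b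
  have "dyadic_cell z h ` (S \<inter> cball y \<rho>) \<subseteq> PiE Basis I"
  proof (rule image_subsetI)
    fix q assume "q \<in> S \<inter> cball y \<rho>"
    then have "(y - z) \<bullet> b - \<rho> \<le> (q - z) \<bullet> b \<and> (q - z) \<bullet> b \<le> (y - z) \<bullet> b + \<rho>"
      if "b \<in> Basis" for b
      using Basis_le_norm[OF that, of "q - y"]
      by (simp add: inner_diff_left dist_norm norm_minus_commute abs_le_iff)
    then have "\<lfloor>((q - z) \<bullet> b) / ?a\<rfloor> \<in> I b" if "b \<in> Basis" for b
      using that unfolding I_def by (auto intro!: floor_mono divide_right_mono)
    then show "dyadic_cell z h q \<in> PiE Basis I" unfolding dyadic_cell_def by auto
  qed
  then have "card (dyadic_cell z h ` (S \<inter> cball y \<rho>)) \<le> (\<Prod>b\<in>Basis. card (I b))"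
    using card_mono[of "PiE Basis I"] by (simp add: I_def card_PiE finite_PiE)
  then have "real (card (dyadic_cell z h ` (S \<inter> cball y \<rho>))) \<le> (\<Prod>b\<in>Basis. real (card (I b)))"
    by (metis of_nat_le_iff of_nat_prod)
  also have "\<dots> \<le> (\<Prod>b\<in>(Basis::'a set). 2 * \<rho> / ?a + 2)"
  proof (rule prod_mono)
    fix b :: 'a
    have "((y - z) \<bullet> b + \<rho>) / ?a - ((y - z) \<bullet> b - \<rho>) / ?a = 2 * \<rho> / ?a"
      by (simp add: diff_divide_distrib[symmetric])
    then show "0 \<le> real (card (I b)) \<and> real (card (I b)) \<le> 2 * \<rho> / ?a + 2"
      using card_floor_interval_le[of "((y - z) \<bullet> b - \<rho>) / ?a" "((y - z) \<bullet> b + \<rho>) / ?a"] assms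
      unfolding I_def by (simp add: divide_right_mono)
  qed
  finally show ?thesis by simp
qed

definition dyadic_cluster :: "'a::euclidean_space set \<Rightarrow> 'a \<Rightarrow> int \<Rightarrow> 'a \<Rightarrow> 'a set" where
  "dyadic_cluster P z k x = {y \<in> P. dyadic_cell z k y = dyadic_cell z k x}"

lemma dyadic_cluster_self: "x \<in> P \<Longrightarrow> x \<in> dyadic_cluster P z k x"
  unfolding dyadic_cluster_def by simp

lemma dyadic_cluster_subset: "dyadic_cluster P z k x \<subseteq> P"
  unfolding dyadic_cluster_def by auto

lemma dyadic_cluster_eq: "y \<in> dyadic_cluster P z k x \<Longrightarrow> dyadic_cluster P z k y = dyadic_cluster P z k x"
  unfolding dyadic_cluster_def by auto

lemma dyadic_cluster_mono: "k \<le> h \<Longrightarrow> dyadic_cluster P z k x \<subseteq> dyadic_cluster P z h x"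
  unfolding dyadic_cluster_def using dyadic_cell_eq_mono by blast

lemma dist_le_if_in_dyadic_cluster:
  fixes x :: "'a::euclidean_space"
  shows "y \<in> dyadic_cluster P z k x \<Longrightarrow> dist x y \<le> real DIM('a) * 2 powr k"
  unfolding dyadic_cluster_def using dist_le_if_dyadic_cell_eq by (metis (mono_tags) mem_Collect_eq)

lemma dyadic_cluster_subset_ballP:
  fixes x :: "'a::euclidean_space"
  assumes "real DIM('a) * 2 powr k \<le> r"
  shows "dyadic_cluster P z k x \<subseteq> ballP P x r"
  unfolding ballP_def using dyadic_cluster_subset dist_le_if_in_dyadic_cluster assms by fastforce

lemma laminar_dyadic_clusters: "laminar {dyadic_cluster P z k x | k x. x \<in> P}"
proof -
  have sub: "dyadic_cluster P z k x \<subseteq> dyadic_cluster P z h y"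
    if "k \<le> h" "w \<in> dyadic_cluster P z k x" "w \<in> dyadic_cluster P z h y" for k h x y w
  proof -
    have "dyadic_cluster P z k x = dyadic_cluster P z k w" using dyadic_cluster_eq[OF that(2)] by simp
    also have "\<dots> \<subseteq> dyadic_cluster P z h w" using that(1) by (rule dyadic_cluster_mono)
    also have "\<dots> = dyadic_cluster P z h y" using dyadic_cluster_eq[OF that(3)] .
    finally show ?thesis .
  qed
  show ?thesis unfolding laminar_def
  proof (intro ballI)
    fix A B assume "A \<in> {dyadic_cluster P z k x | k x. x \<in> P}" "B \<in> {dyadic_cluster P z k x | k x. x \<in> P}"
    then obtain k x h y where A: "A = dyadic_cluster P z k x" and B: "B = dyadic_cluster P z h y"
      by blast
    show "A \<inter> B = {} \<or> A \<subseteq> B \<or> B \<subseteq> A"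
    proof (cases "A \<inter> B = {}")
      case False
      then obtain w where w: "w \<in> dyadic_cluster P z k x" "w \<in> dyadic_cluster P z h y"
        unfolding A B by blast
      show ?thesis
        unfolding A B using sub[OF _ w] sub[OF _ w(2,1)] by (cases "k \<le> h") simp_all
    qed simp
  qed
qed

lemma card_dyadic_clusters_le:
  "finite P \<Longrightarrow> card {dyadic_cluster P z k x | k x. x \<in> P} \<le> 2 * card P"
  by (rule card_laminar_le)
    (use laminar_dyadic_clusters dyadic_cluster_subset dyadic_cluster_self in blast)+

lemma dyadic_clusters_eventually_whole:
  assumes "finite P"
  obtains z N where "\<And>h x. N \<le> h \<Longrightarrow> x \<in> P \<Longrightarrow> dyadic_cluster P z h x = P"
proof -
  obtain M where M: "\<And>x. x \<in> P \<Longrightarrow> norm x \<le> M"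
    using finite_imp_bounded[OF assms] bounded_iff by blast
  define z :: 'a where "z = - M *\<^sub>R One"
  have coord: "(x - z) \<bullet> b = x \<bullet> b + M" if "b \<in> Basis" for x b
    using that unfolding z_def by (simp add: inner_add_left)
  obtain N :: nat where N: "2 * M < 2 ^ N"
    using real_arch_pow[of 2 "2 * M"] by auto
  have "dyadic_cluster P z h x = P" if "int N \<le> h" "x \<in> P" for h x
  proof -
    have "(2::real) ^ N \<le> 2 powr h"
      using that(1) by (simp add: powr_realpow[symmetric])
    then have "0 \<le> (y - z) \<bullet> b \<and> (y - z) \<bullet> b < 2 powr h" if "y \<in> P" "b \<in> Basis" for y b
      using N M[OF that(1)] Basis_le_norm[OF that(2), of y] coord[OF that(2), of y]
      unfolding abs_le_iff by linarith
    then have "dyadic_cell z h y = (\<lambda>b\<in>Basis. 0)" if "y \<in> P" for y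
      using that by (intro dyadic_cell_eq_zero) blast
    then show ?thesis unfolding dyadic_cluster_def using that(2) by auto
  qed
  then show ?thesis using that by blast
qed

definition cluster_top_level :: "'a::euclidean_space set \<Rightarrow> 'a \<Rightarrow> 'a set \<Rightarrow> int \<Rightarrow> bool" where
  "cluster_top_level P z A h \<longleftrightarrow>
     (\<exists>y\<in>P. A = dyadic_cluster P z h y \<and> dyadic_cluster P z (h + 1) y \<noteq> A)"

lemma cluster_top_level_not_less:
  assumes "cluster_top_level P z A h" "cluster_top_level P z A h'"
  shows "\<not> h < h'"
proof
  assume "h < h'"
  obtain y where y: "y \<in> P" "A = dyadic_cluster P z h y" "dyadic_cluster P z (h + 1) y \<noteq> A"
    using assms(1) unfolding cluster_top_level_def by blast
  obtain y' where y': "y' \<in> P" "A = dyadic_cluster P z h' y'"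
    using assms(2) unfolding cluster_top_level_def by blast
  have "y' \<in> A" using y' dyadic_cluster_self by metis
  then have "dyadic_cluster P z h y' = A" using y(2) dyadic_cluster_eq by metis
  moreover have "dyadic_cluster P z h y' \<subseteq> dyadic_cluster P z (h + 1) y'"
    and "dyadic_cluster P z (h + 1) y' \<subseteq> dyadic_cluster P z h' y'"
    using \<open>h < h'\<close> by (simp_all add: dyadic_cluster_mono)
  ultimately have "dyadic_cluster P z (h + 1) y' = A" using y'(2) by blast
  moreover have "y' \<in> dyadic_cluster P z (h + 1) y"
    using \<open>y' \<in> A\<close> y(2) dyadic_cluster_mono[of h "h + 1"] by auto
  ultimately show False using y(3) dyadic_cluster_eq by metis
qed

lemma cluster_top_level_unique:
  "cluster_top_level P z A h \<Longrightarrow> cluster_top_level P z A h' \<Longrightarrow> h = h'"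
  using cluster_top_level_not_less by (metis linorder_neqE)

definition neighbour_clusters :: "'a::euclidean_space set \<Rightarrow> 'a \<Rightarrow> real \<Rightarrow> 'a set \<Rightarrow> 'a set set" where
  "neighbour_clusters P z c A =
     {dyadic_cluster P z h q | h q. cluster_top_level P z A h \<and> q \<in> P \<and> (\<exists>y\<in>A. dist y q \<le> c * 2 powr h)}"

lemma card_neighbour_clusters_le:
  fixes P :: "'a::euclidean_space set"
  assumes "finite P" "c \<ge> 0"
  shows "real (card (neighbour_clusters P z c A)) \<le> (2 * real DIM('a) + 2 * c + 2) ^ DIM('a)"
proof (cases "\<exists>h. cluster_top_level P z A h")
  case False
  then show ?thesis unfolding neighbour_clusters_def using assms(2) by simp
next
  case True
  let ?d = "real DIM('a)"
  obtain h y0 where h: "cluster_top_level P z A h" and y0: "y0 \<in> P" "A = dyadic_cluster P z h y0"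
    using True unfolding cluster_top_level_def by blast
  define \<rho> where "\<rho> = (?d + c) * 2 powr h"
  have "neighbour_clusters P z c A \<subseteq>
      (\<lambda>v. {y \<in> P. dyadic_cell z h y = v}) ` dyadic_cell z h ` (P \<inter> cball y0 \<rho>)"
  proof
    fix B assume "B \<in> neighbour_clusters P z c A"
    then obtain h' q y where "cluster_top_level P z A h'" "B = dyadic_cluster P z h' q" "q \<in> P"
      "y \<in> A" "dist y q \<le> c * 2 powr h'"
      unfolding neighbour_clusters_def by blast
    moreover from this have "h' = h" using cluster_top_level_unique h by blast
    moreover have "dist y0 y \<le> ?d * 2 powr h"
      using \<open>y \<in> A\<close> y0(2) dist_le_if_in_dyadic_cluster by blast
    ultimately have "q \<in> P \<inter> cball y0 \<rho>" and "B = {y \<in> P. dyadic_cell z h y = dyadic_cell z h q}"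
      using dist_triangle[of y0 q y] unfolding \<rho>_def dyadic_cluster_def by (auto simp: algebra_simps)
    then show "B \<in> (\<lambda>v. {y \<in> P. dyadic_cell z h y = v}) ` dyadic_cell z h ` (P \<inter> cball y0 \<rho>)"
      by blast
  qed
  then have "card (neighbour_clusters P z c A) \<le> card (dyadic_cell z h ` (P \<inter> cball y0 \<rho>))"
    using assms(1) by (meson card_image_le card_mono finite_Int finite_imageI le_trans)
  then have "real (card (neighbour_clusters P z c A)) \<le> (2 * \<rho> / 2 powr h + 2) ^ DIM('a)"
    using card_dyadic_cells_cball_le[of \<rho> z h P y0] assms(2) unfolding \<rho>_def by simp
  also have "2 * \<rho> / 2 powr h + 2 = 2 * ?d + 2 * c + 2"
    unfolding \<rho>_def by (simp add: field_simps)
  finally show ?thesis .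
qed

section \<open>Charging greedy pairs to clusters\<close>

definition pair_level :: "real \<Rightarrow> 'a::euclidean_space \<times> 'a \<Rightarrow> int" where
  "pair_level s pq = \<lfloor>log 2 (dist (fst pq) (snd pq) / ((2 * s + 2) * real DIM('a)))\<rfloor>"

lemma pair_level_bounds:
  fixes p q :: "'a::euclidean_space"
  assumes "p \<noteq> q" "s > -1"
  defines "r \<equiv> dist p q / (2 * s + 2)"
  shows "real DIM('a) * 2 powr pair_level s (p, q) \<le> r"
    and "r < 2 * real DIM('a) * 2 powr pair_level s (p, q)"
proof -
  let ?d = "real DIM('a)"
  have "r / ?d > 0" using assms unfolding r_def by simp
  moreover have "pair_level s (p, q) = \<lfloor>log 2 (r / ?d)\<rfloor>"
    unfolding pair_level_def r_def by (simp add: divide_divide_eq_left)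
  ultimately have "2 powr pair_level s (p, q) \<le> r / ?d \<and> r / ?d < 2 powr (pair_level s (p, q) + 1)"
    using floor_log_eq_powr_iff[of "r / ?d" 2 "pair_level s (p, q)"] by simp
  then show "?d * 2 powr pair_level s (p, q) \<le> r" "r < 2 * ?d * 2 powr pair_level s (p, q)"
    by (simp_all add: field_simps powr_add)
qed

definition cluster_pair :: "'a::euclidean_space set \<Rightarrow> 'a \<Rightarrow> real \<Rightarrow> 'a \<times> 'a \<Rightarrow> 'a set set" where
  "cluster_pair P z s pq =
     {dyadic_cluster P z (pair_level s pq) (fst pq), dyadic_cluster P z (pair_level s pq) (snd pq)}"

lemma covers_if_cluster_pair_eq:
  fixes p q :: "'a::euclidean_space"
  assumes "p \<noteq> q" "s > -1" "p' \<in> P" "q' \<in> P"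
    and eq: "cluster_pair P z s (p', q') = cluster_pair P z s (p, q)"
  shows "covers (greedy_pair P s (p, q)) p' q'"
proof -
  let ?k = "pair_level s (p, q)" and ?k' = "pair_level s (p', q')"
  let ?r = "dist p q / (2 * s + 2)"
  have "dyadic_cluster P z ?k p \<subseteq> ballP P p ?r" "dyadic_cluster P z ?k q \<subseteq> ballP P q ?r"
    using pair_level_bounds(1)[OF assms(1,2)] by (simp_all add: dyadic_cluster_subset_ballP)
  moreover have "p' \<in> dyadic_cluster P z ?k' p'" "q' \<in> dyadic_cluster P z ?k' q'"
    using assms(3,4) by (simp_all add: dyadic_cluster_self)
  moreover have
    "dyadic_cluster P z ?k' p' = dyadic_cluster P z ?k p \<and> dyadic_cluster P z ?k' q' = dyadic_cluster P z ?k q \<or>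
     dyadic_cluster P z ?k' p' = dyadic_cluster P z ?k q \<and> dyadic_cluster P z ?k' q' = dyadic_cluster P z ?k p"
    using eq unfolding cluster_pair_def by (simp add: doubleton_eq_iff)
  ultimately show ?thesis
    unfolding covers_def greedy_pair_def Let_def by auto
qed

lemma inj_on_cluster_pair:
  assumes run: "greedy_run P s ps" and "s > -1"
  shows "inj_on (cluster_pair P z s) (set ps)"
proof -
  have eq_if_less: "ps ! i = ps ! j"
    if ij: "i < j" "j < length ps" "cluster_pair P z s (ps ! i) = cluster_pair P z s (ps ! j)" for i j
  proof -
    obtain p q p' q' where "ps ! i = (p, q)" "ps ! j = (p', q')" by fastforce
    moreover have "p \<noteq> q" "p' \<in> P" "q' \<in> P"
      "\<not> covers (greedy_pair P s (ps ! i)) (fst (ps ! j)) (snd (ps ! j))"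
      using run ij calculation unfolding greedy_run_def by (metis fst_conv snd_conv order.strict_trans)+
    ultimately show ?thesis using covers_if_cluster_pair_eq[of p q s p' P q' z] ij(3) assms(2) by auto
  qed
  show ?thesis
  proof (rule inj_onI)
    fix a b assume "a \<in> set ps" "b \<in> set ps" and eq: "cluster_pair P z s a = cluster_pair P z s b"
    then obtain i j where "i < length ps" "j < length ps" "a = ps ! i" "b = ps ! j"
      by (auto simp: in_set_conv_nth)
    then show "a = b"
      using eq_if_less[of i j] eq_if_less[of j i] eq by (cases i j rule: linorder_cases) auto
  qed
qed

lemma dyadic_clusters_last_common_level:
  assumes "y \<in> P" "y \<notin> dyadic_cluster P z k x" and whole: "\<And>h. N \<le> h \<Longrightarrow> dyadic_cluster P z h x = P"
  obtains h where "k \<le> h"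
    "dyadic_cluster P z h x = dyadic_cluster P z k x" "dyadic_cluster P z h y = dyadic_cluster P z k y"
    "dyadic_cluster P z (h + 1) x \<noteq> dyadic_cluster P z k x \<or>
     dyadic_cluster P z (h + 1) y \<noteq> dyadic_cluster P z k y"
proof -
  define H where "H = {h. k \<le> h \<and> dyadic_cluster P z h x = dyadic_cluster P z k x
                          \<and> dyadic_cluster P z h y = dyadic_cluster P z k y}"
  have "h < N" if "h \<in> H" for h
  proof (rule ccontr)
    assume "\<not> h < N"
    then have "dyadic_cluster P z k x = P" using whole that unfolding H_def by auto
    then show False using assms(1,2) by blast
  qed
  then have "H \<subseteq> {k..<N}" unfolding H_def by auto
  then have "finite H" by (rule finite_subset) simp
  moreover have "k \<in> H" unfolding H_def by simp
  ultimately have "Max H \<in> H" "Max H + 1 \<notin> H"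
    using Max_ge[of H "Max H + 1"] by (auto intro: Max_in)
  then show ?thesis using that unfolding H_def by auto
qed

lemma not_in_dyadic_cluster_pair_level:
  assumes "p \<noteq> q" "s \<ge> 0"
  shows "q \<notin> dyadic_cluster P z (pair_level s (p, q)) p"
proof
  assume "q \<in> dyadic_cluster P z (pair_level s (p, q)) p"
  then have "dist p q \<le> dist p q / (2 * s + 2)"
    using pair_level_bounds(1)[of p q s] assms dist_le_if_in_dyadic_cluster by fastforce
  then show False using assms by (simp add: divide_simps)
qed

lemma dist_le_pair_level:
  fixes p q :: "'a::euclidean_space"
  assumes "p \<noteq> q" "s \<ge> 0" "pair_level s (p, q) \<le> h"
  shows "dist p q \<le> 4 * real DIM('a) * (s + 1) * 2 powr h"
proof -
  let ?k = "pair_level s (p, q)"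
  have "dist p q < (2 * s + 2) * (2 * real DIM('a) * 2 powr ?k)"
    using pair_level_bounds(2)[OF assms(1)] assms(2) by (simp add: divide_less_eq mult.commute)
  also have "\<dots> = 4 * real DIM('a) * (s + 1) * 2 powr ?k" by (simp add: algebra_simps)
  also have "\<dots> \<le> 4 * real DIM('a) * (s + 1) * 2 powr h"
    using assms(2,3) by (intro mult_left_mono) simp_all
  finally show ?thesis by simp
qed

lemma neighbour_clustersI:
  "cluster_top_level P z A h \<Longrightarrow> q \<in> P \<Longrightarrow> y \<in> A \<Longrightarrow> dist y q \<le> c * 2 powr h \<Longrightarrow>
    dyadic_cluster P z h q \<in> neighbour_clusters P z c A"
  unfolding neighbour_clusters_def by blast

lemma cluster_pair_in_neighbours:
  fixes p q :: "'a::euclidean_space"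
  assumes "p \<in> P" "q \<in> P" "p \<noteq> q" "s \<ge> 0"
    and whole: "\<And>h x. N \<le> h \<Longrightarrow> x \<in> P \<Longrightarrow> dyadic_cluster P z h x = P"
  shows "cluster_pair P z s (p, q) \<in> (\<lambda>(A, B). {A, B}) `
           Sigma {dyadic_cluster P z k x | k x. x \<in> P} (neighbour_clusters P z (4 * real DIM('a) * (s + 1)))"
proof -
  let ?d = "real DIM('a)" and ?k = "pair_level s (p, q)"
  let ?A = "dyadic_cluster P z ?k p" and ?B = "dyadic_cluster P z ?k q"
  let ?N = "neighbour_clusters P z (4 * ?d * (s + 1))"
  obtain h where h: "?k \<le> h" "dyadic_cluster P z h p = ?A" "dyadic_cluster P z h q = ?B"
    "dyadic_cluster P z (h + 1) p \<noteq> ?A \<or> dyadic_cluster P z (h + 1) q \<noteq> ?B"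
    using dyadic_clusters_last_common_level[OF assms(2) not_in_dyadic_cluster_pair_level[OF assms(3,4)]]
      whole assms(1) by blast
  have close: "dist p q \<le> 4 * ?d * (s + 1) * 2 powr h"
    using dist_le_pair_level[OF assms(3,4) h(1)] .
  have "p \<in> ?A" "q \<in> ?B" using assms(1,2) by (simp_all add: dyadic_cluster_self)
  have F: "?A \<in> {dyadic_cluster P z k x | k x. x \<in> P}" "?B \<in> {dyadic_cluster P z k x | k x. x \<in> P}"
    using assms(1,2) by blast+
  have "?B \<in> ?N ?A \<or> ?A \<in> ?N ?B"
    using h(4)
  proof
    assume "dyadic_cluster P z (h + 1) p \<noteq> ?A"
    then have top: "cluster_top_level P z ?A h"
      unfolding cluster_top_level_def using assms(1) h(2) by metis
    show ?thesis
      using neighbour_clustersI[OF top assms(2) \<open>p \<in> ?A\<close> close] h(3) by simp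
  next
    assume "dyadic_cluster P z (h + 1) q \<noteq> ?B"
    then have top: "cluster_top_level P z ?B h"
      unfolding cluster_top_level_def using assms(2) h(3) by metis
    show ?thesis
      using neighbour_clustersI[OF top assms(1) \<open>q \<in> ?B\<close>] close h(2)
      by (simp add: dist_commute)
  qed
  then show ?thesis
  proof
    assume "?B \<in> ?N ?A"
    with F have "(?A, ?B) \<in> Sigma {dyadic_cluster P z k x | k x. x \<in> P} ?N" by blast
    then show ?thesis unfolding cluster_pair_def by (rule rev_image_eqI) simp
  next
    assume "?A \<in> ?N ?B"
    with F have "(?B, ?A) \<in> Sigma {dyadic_cluster P z k x | k x. x \<in> P} ?N" by blast
    then show ?thesis unfolding cluster_pair_def by (rule rev_image_eqI) (simp add: insert_commute)
  qed
qed

lemma greedy_run_set_memD: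
  assumes "greedy_run P s ps" "(p, q) \<in> set ps"
  shows "p \<in> P" "q \<in> P" "p \<noteq> q"
proof -
  obtain i where "i < length ps" "ps ! i = (p, q)" using assms(2) by (auto simp: in_set_conv_nth)
  moreover have "fst (ps ! i) \<in> P \<and> snd (ps ! i) \<in> P \<and> fst (ps ! i) \<noteq> snd (ps ! i)"
    using assms(1) calculation(1) unfolding greedy_run_def by blast
  ultimately show "p \<in> P" "q \<in> P" "p \<noteq> q" by simp_all
qed

lemma card_greedy_output_le_sum_neighbour_clusters:
  fixes P :: "'a::euclidean_space set"
  assumes fin: "finite P" and "s > 1" and run: "greedy_run P s ps"
    and whole: "\<And>h x. N \<le> h \<Longrightarrow> x \<in> P \<Longrightarrow> dyadic_cluster P z h x = P"
  defines "F \<equiv> {dyadic_cluster P z k x | k x. x \<in> P}"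
    and "Nb \<equiv> neighbour_clusters P z (4 * real DIM('a) * (s + 1))"
  shows "card (greedy_output P s ps) \<le> (\<Sum>A\<in>F. card (Nb A))"
proof -
  have "F \<subseteq> Pow P" "Nb A \<subseteq> Pow P" for A
    using dyadic_cluster_subset unfolding F_def Nb_def neighbour_clusters_def by blast+
  then have finF: "finite F" and finN: "finite (Nb A)" for A
    using fin by (meson finite_Pow_iff finite_subset)+
  have "card (greedy_output P s ps) \<le> card (set ps)"
    unfolding greedy_output_def by (rule card_image_le) simp
  also have "\<dots> = card (cluster_pair P z s ` set ps)"
    using inj_on_cluster_pair[OF run, of z] \<open>s > 1\<close> by (simp add: card_image)
  also have "\<dots> \<le> card ((\<lambda>(A, B). {A, B}) ` Sigma F Nb)"
  proof (rule card_mono)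
    show "finite ((\<lambda>(A, B). {A, B}) ` Sigma F Nb)" using finF finN by simp
    show "cluster_pair P z s ` set ps \<subseteq> (\<lambda>(A, B). {A, B}) ` Sigma F Nb"
    proof (rule image_subsetI)
      fix pq assume "pq \<in> set ps"
      moreover obtain p q where "pq = (p, q)" by fastforce
      ultimately show "cluster_pair P z s pq \<in> (\<lambda>(A, B). {A, B}) ` Sigma F Nb"
        using cluster_pair_in_neighbours[OF greedy_run_set_memD[OF run] _ whole] \<open>s > 1\<close>
        unfolding F_def Nb_def by simp
    qed
  qed
  also have "\<dots> \<le> card (Sigma F Nb)" using finF finN by (intro card_image_le) simp
  also have "\<dots> = (\<Sum>A\<in>F. card (Nb A))" using finF finN by (simp add: card_SigmaI)
  finally show ?thesis .
qed

lemma card_greedy_output_le: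
  fixes P :: "'a::euclidean_space set"
  assumes fin: "finite P" and "s > 1" and run: "greedy_run P s ps"
  shows "real (card (greedy_output P s ps)) \<le> 2 * real (card P) * (20 * real DIM('a) * s) ^ DIM('a)"
proof -
  let ?d = "real DIM('a)"
  obtain z N where whole: "\<And>h x. N \<le> h \<Longrightarrow> x \<in> P \<Longrightarrow> dyadic_cluster P z h x = P"
    using dyadic_clusters_eventually_whole[OF fin] by metis
  let ?F = "{dyadic_cluster P z k x | k x. x \<in> P}"
  let ?Nb = "neighbour_clusters P z (4 * ?d * (s + 1))"
  have "real (card (greedy_output P s ps)) \<le> (\<Sum>A\<in>?F. real (card (?Nb A)))"
    using card_greedy_output_le_sum_neighbour_clusters[OF fin \<open>s > 1\<close> run whole]
    by (simp only: of_nat_sum[symmetric] of_nat_le_iff)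
  also have "\<dots> \<le> (\<Sum>A\<in>?F. (2 * ?d + 2 * (4 * ?d * (s + 1)) + 2) ^ DIM('a))"
    using \<open>s > 1\<close> by (intro sum_mono card_neighbour_clusters_le[OF fin]) simp
  also have "\<dots> = real (card ?F) * (2 * ?d + 2 * (4 * ?d * (s + 1)) + 2) ^ DIM('a)" by simp
  also have "\<dots> \<le> 2 * real (card P) * (20 * ?d * s) ^ DIM('a)"
  proof (rule mult_mono)
    show "real (card ?F) \<le> 2 * real (card P)" using card_dyadic_clusters_le[OF fin, of z] by linarith
    have "?d \<ge> 1" by (simp add: DIM_positive Suc_leI)
    then have "12 * ?d \<le> 12 * (?d * s)" using \<open>s > 1\<close> by simp
    have "2 * ?d + 2 * (4 * ?d * (s + 1)) + 2 = 10 * ?d + 2 + 8 * (?d * s)" by (simp add: algebra_simps)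
    also have "\<dots> \<le> 20 * ?d * s" using \<open>?d \<ge> 1\<close> \<open>12 * ?d \<le> 12 * (?d * s)\<close> by linarith
    finally show "(2 * ?d + 2 * (4 * ?d * (s + 1)) + 2) ^ DIM('a) \<le> (20 * ?d * s) ^ DIM('a)"
      using \<open>s > 1\<close> by (intro power_mono) simp_all
  qed (use \<open>s > 1\<close> in simp_all)
  finally show ?thesis .
qed

theorem theorem8:
  "\<exists>C::real. \<forall>(P::'a::euclidean_space set) (s::real) ps.
     finite P \<longrightarrow> s > 1 \<longrightarrow> greedy_run P s ps \<longrightarrow>
     real (card (greedy_output P s ps)) \<le> C * real (card P) * s ^ DIM('a)"
proof (intro exI allI impI)
  fix P :: "'a set" and s :: real and ps
  assume "finite P" "s > 1" "greedy_run P s ps"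
  then have "real (card (greedy_output P s ps)) \<le> 2 * real (card P) * (20 * real DIM('a) * s) ^ DIM('a)"
    by (rule card_greedy_output_le)
  then show "real (card (greedy_output P s ps)) \<le> (2 * (20 * real DIM('a)) ^ DIM('a)) * real (card P) * s ^ DIM('a)"
    by (simp add: power_mult_distrib mult_ac)
qed

end
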